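(* Assume the thermal noise in the data phase is zero, $\mathbf N_D=\mathbf 0$, so that $\mathbf Y_D=\mathbf H\mathbf S_D+\mathbf J\mathbf W_D$. If the jammer is not eclipsed (in the sense of eclipsing with perfect CSI defined in the context), then the optimization problem $$\min_{\tilde{\mathbf S}_D\in\mathcal S^{U\times D},\ \tilde{\mathbf P}\in\mathscr G_{B-I}(\mathbb C^B)}\ \big\|\tilde{\mathbf P}(\mathbf Y_D-\mathbf H\tilde{\mathbf S}_D)\big\|_F^2$$ has the unique minimizer $(\hat{\mathbf P},\hat{\mathbf S}_D)=(\mathbf I_B-\mathbf J\mathbf J^\dagger,\ \mathbf S_D)$.
   Context: Let $B,U,I,D$ be positive integers with $B\ge U+I$. Let $\mathcal S=\{(\pm1\pm i)/\sqrt2\}\subset\mathbb C$ (QPSK). Let $\mathbf H\in\mathbb C^{B\times U}$ and $\mathbf J\in\mathbb C^{B\times I}$ be such that the concatenation $[\mathbf H,\mathbf J]\in\mathbb C^{B\times(U+I)}$ has full column rank $U+I$. Let $\mathbf S_D\in\mathcal S^{U\times D}$ (data matrix), $\mathbf W_D\in\mathbb C^{I\times D}$ (jammer transmit matrix), $\mathbf N_D\in\mathbb C^{B\times D}$, and $\mathbf Y_D=\mathbf H\mathbf S_D+\mathbf J\mathbf W_D+\mathbf N_D$. $\mathbf A^\dagger$ is the Moore–Penrose pseudoinverse. $\mathscr G_{B-I}(\mathbb C^B)$ denotes the set of $B\times B$ orthogonal projection matrices onto $(B-I)$-dimensional subspaces of $\mathbb C^B$, i.e. matrices $\mathbf I_B-\mathbf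 Q\mathbf Q^{\mathrm H}$ with $\mathbf Q\in\mathbb C^{B\times I}$ having orthonormal columns. Eclipsing with perfect CSI: the jammer is eclipsed if there exists $\tilde{\mathbf S}_D\in\mathcal S^{U\times D}\setminus\{\mathbf S_D\}$ such that the vertically stacked matrix $\begin{bmatrix}\mathbf S_D-\tilde{\mathbf S}_D\\ \mathbf W_D\end{bmatrix}\in\mathbb C^{(U+I)\times D}$ has rank at most $I$. *)

theory Defs
  imports "HOL-Analysis.Analysis"
begin

definition qpsk :: "complex set" where
  "qpsk = {x. \<exists>a b::real. a \<in> {-1, 1} \<and> b \<in> {-1, 1} \<and>
              x = (complex_of_real a + \<i> * complex_of_real b) / complex_of_real (sqrt 2)}"

definition mat_over :: "'a set \<Rightarrow> ('a^'n^'m) set" where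
  "mat_over A = {M. \<forall>i j. M $ i $ j \<in> A}"

definition ctrans :: "complex^'n^'m \<Rightarrow> complex^'m^'n" where
  "ctrans A = (\<chi> i j. cnj (A $ j $ i))"

definition pinv :: "complex^'n^'m \<Rightarrow> complex^'m^'n" where
  "pinv A = (THE X. A ** X ** A = A \<and> X ** A ** X = X \<and>
                    ctrans (A ** X) = A ** X \<and> ctrans (X ** A) = X ** A)"

definition frob_sq :: "complex^'n^'m \<Rightarrow> real" where
  "frob_sq A = (\<Sum>i\<in>UNIV. \<Sum>j\<in>UNIV. (cmod (A $ i $ j))\<^sup>2)"

definition hcat :: "'a^'n^'m \<Rightarrow> 'a^'k^'m \<Rightarrow> 'a^('n + 'k)^'m" where
  "hcat A C = (\<chi> r c. case c of Inl j \<Rightarrow> A $ r $ j | Inr j \<Rightarrow> C $ r $ j)"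

definition vcat :: "'a^'n^'m \<Rightarrow> 'a^'n^'k \<Rightarrow> 'a^'n^('m + 'k)" where
  "vcat A C = (\<chi> r c. case r of Inl i \<Rightarrow> A $ i $ c | Inr i \<Rightarrow> C $ i $ c)"

text \<open>G_{B-I}(C^B): projections I_B - Q Q^H with Q in C^{B x I} having orthonormal
  columns; the number of columns I is given by the type 'i.\<close>
definition grass_proj :: "'i::finite itself \<Rightarrow> (complex^'b^'b) set" where
  "grass_proj _ = {P. \<exists>Q :: complex^'i^'b. ctrans Q ** Q = mat 1 \<and> P = mat 1 - Q ** ctrans Q}"

definition eclipsed :: "complex^'d^'u \<Rightarrow> complex^'d^'i \<Rightarrow> bool" where
  "eclipsed S W = (\<exists>S' \<in> mat_over qpsk. S' \<noteq> S \<and> rank (vcat (S - S') W) \<le> CARD('i))"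

end

theory Submission
  imports Defs
begin

(* At the true pair the residual Y - H S = J W lies in the column space of J, which
   I - J J^+ annihilates, so the objective vanishes there.  Conversely, let
   P = I - Q Q^H kill Y - H S' = [H, J] [S - S'; W].  Then Y - H S' = Q X for some X, so
   [S - S'; W] = (L Q) X for a left inverse L of [H, J] has rank at most I, and
   non-eclipsing forces S' = S.  Then P J W = 0.  Non-eclipsing also gives W full row
   rank (from a nonzero z with z W = 0, flipping one entry of S stacks a rank-one
   difference on a matrix of rank < I), so P J = 0, i.e. Q Q^H J = J.  Only one matrix
   Q Q^H with Q of I columns fixes J (both are Hermitian and absorb each other), hence
   P = I - J J^+. *)

lemma ctrans_matrix_mult: "ctrans (A ** B) = ctrans B ** ctrans (A :: complex^'n^'m)"
  by (simp add: ctrans_def matrix_matrix_mult_def vec_eq_iff mult.commute)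

lemma ctrans_ctrans [simp]: "ctrans (ctrans A) = A"
  by (simp add: ctrans_def vec_eq_iff)

lemma ctrans_mat_1 [simp]: "ctrans (mat 1 :: complex^'n^'n) = mat 1"
  by (simp add: ctrans_def vec_eq_iff mat_def)

lemma matrix_diff_ldistrib: "(A :: 'a::ring_1^'n^'m) ** (B - C) = A ** B - A ** C"
  by (simp add: matrix_matrix_mult_def vec_eq_iff algebra_simps sum_subtractf)

lemma matrix_diff_rdistrib: "((B :: 'a::ring_1^'n^'m) - C) ** A = B ** A - C ** A"
  by (simp add: matrix_matrix_mult_def vec_eq_iff algebra_simps sum_subtractf)

lemma row_matrix_mult: "row r (A ** B) = row r A v* B"
  by (simp add: row_def vector_matrix_mult_def matrix_matrix_mult_def vec_eq_iff mult.commute)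

lemma hcat_matrix_mult_vcat: "hcat H J ** vcat X Y = H ** X + J ** (Y :: 'a::semiring_1^'d^'k)"
  by (simp add: hcat_def vcat_def matrix_matrix_mult_def vec_eq_iff sum.Plus flip: UNIV_Plus_UNIV)

lemma left_inverse_hcat_right:
  assumes "L ** hcat H J = mat 1"
  shows "(\<chi> i c. L $ Inr i $ c) ** J = mat 1"
proof -
  have "((\<chi> i c. L $ Inr i $ c) ** J) $ i $ j = (L ** hcat H J) $ Inr i $ Inr j" for i j
    by (simp add: matrix_matrix_mult_def hcat_def)
  then show ?thesis
    using assms by (simp add: vec_eq_iff mat_def)
qed

lemma frob_sq_zero [simp]: "frob_sq 0 = 0"
  by (simp add: frob_sq_def)

lemma frob_sq_pos_iff: "0 < frob_sq A \<longleftrightarrow> A \<noteq> 0"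
proof -
  have "frob_sq A = 0 \<longleftrightarrow> A = 0"
    unfolding frob_sq_def by (simp add: sum_nonneg sum_nonneg_eq_0_iff vec_eq_iff)
  moreover have "frob_sq A \<ge> 0"
    unfolding frob_sq_def by (intro sum_nonneg) auto
  ultimately show ?thesis
    by linarith
qed

lemma rank_le_card_if_rows_in_span:
  assumes "rows A \<subseteq> vec.span B" "finite B"
  shows "rank A \<le> card B"
  using assms by (simp add: row_rank_def_gen vec.dim_le_card)

lemma rank_matrix_mult_le:
  fixes X :: "'a::field^'k::finite^'m::finite" and Y :: "'a^'d::finite^'k"
  shows "rank (X ** Y) \<le> CARD('k)"
proof -
  have "rows (X ** Y) \<subseteq> vec.span (rows Y)"
  proof
    fix v assume "v \<in> rows (X ** Y)"
    then obtain r where "v = row r X v* Y"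
      by (auto simp: rows_def row_matrix_mult)
    moreover have "row r X v* Y = (\<Sum>k\<in>UNIV. X $ r $ k *s row k Y)"
      by (simp add: row_def vector_matrix_mult_def vec_eq_iff sum_component)
    moreover have "row k Y \<in> rows Y" for k
      by (auto simp: rows_def)
    ultimately show "v \<in> vec.span (rows Y)"
      by (simp add: vec.span_base vec.span_scale vec.span_sum)
  qed
  moreover have "rows Y = range (\<lambda>k. row k Y)"
    by (auto simp: rows_def)
  ultimately show ?thesis
    by (metis rank_le_card_if_rows_in_span card_image_le finite finite_imageI order_trans)
qed

lemma full_column_rank_left_invertible:
  fixes A :: "'a::field^'n::finite^'m::finite"
  assumes "rank A = CARD('n)"
  obtains L where "L ** A = mat 1"
proof -
  have "vec.dim (rows A) = vec.dimension TYPE('a) TYPE('n)"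
    using assms by (simp add: row_rank_def_gen vec.dimension_def card_cart_basis)
  then have "vec.span (rows A) = UNIV"
    using vec.dim_eq_full by blast
  then show ?thesis
    using matrix_left_invertible_span_rows_gen that by blast
qed

section \<open>Gram--Schmidt orthonormalisation\<close>

definition cinner :: "complex^'n \<Rightarrow> complex^'n \<Rightarrow> complex" where
  "cinner x y = (\<Sum>k\<in>UNIV. cnj (x $ k) * y $ k)"

lemma cinner_add_right: "cinner x (y + z) = cinner x y + cinner x z"
  by (simp add: cinner_def algebra_simps sum.distrib)

lemma cinner_diff_right: "cinner x (y - z) = cinner x y - cinner x z"
  by (simp add: cinner_def algebra_simps sum_subtractf)

lemma cinner_scale_right: "cinner x (c *s y) = c * cinner x y"
  by (simp add: cinner_def sum_distrib_left algebra_simps)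

lemma cinner_scale_left: "cinner (c *s x) y = cnj c * cinner x y"
  by (simp add: cinner_def sum_distrib_left algebra_simps)

lemma cinner_sum_right: "cinner x (\<Sum>t\<in>T. f t) = (\<Sum>t\<in>T. cinner x (f t))"
  by (simp add: cinner_def sum_component sum_distrib_left sum.swap[of _ T])

lemma cinner_commute: "cinner y x = cnj (cinner x y)"
  by (simp add: cinner_def mult.commute)

lemma cinner_self: "cinner x x = complex_of_real ((norm x)\<^sup>2)"
proof -
  have "cnj (x $ k) * x $ k = complex_of_real ((cmod (x $ k))\<^sup>2)" for k
    by (metis complex_norm_square mult.commute)
  then have "cinner x x = complex_of_real (\<Sum>k\<in>UNIV. (cmod (x $ k))\<^sup>2)"
    by (simp only: cinner_def of_real_sum)
  also have "(\<Sum>k\<in>UNIV. (cmod (x $ k))\<^sup>2) = (norm x)\<^sup>2"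
    by (simp add: norm_vec_def L2_set_def sum_nonneg)
  finally show ?thesis .
qed

definition orthonormal :: "(complex^'n) set \<Rightarrow> bool" where
  "orthonormal T \<longleftrightarrow> finite T \<and> (\<forall>s\<in>T. \<forall>t\<in>T. cinner s t = (if s = t then 1 else 0))"

definition orth_proj :: "(complex^'n) set \<Rightarrow> complex^'n \<Rightarrow> complex^'n" where
  "orth_proj T v = (\<Sum>t\<in>T. cinner t v *s t)"

lemma orth_proj_zero: "orth_proj T 0 = 0"
  by (simp add: orth_proj_def cinner_def)

lemma orth_proj_add: "orth_proj T (x + y) = orth_proj T x + orth_proj T y"
  by (simp add: orth_proj_def cinner_add_right vector_sadd_rdistrib sum.distrib)

lemma orth_proj_scale: "orth_proj T (c *s x) = c *s orth_proj T x"
  by (simp add: orth_proj_def cinner_scale_right vec.scale_sum_right vector_smult_assoc)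

lemma orth_proj_in_span: "orth_proj T v \<in> vec.span T"
  unfolding orth_proj_def by (intro vec.span_sum vec.span_scale vec.span_base)

lemma cinner_orth_proj:
  assumes "orthonormal T" "s \<in> T"
  shows "cinner s (orth_proj T v) = cinner s v"
proof -
  have "cinner s (orth_proj T v) = (\<Sum>t\<in>T. cinner t v * cinner s t)"
    by (simp add: orth_proj_def cinner_sum_right cinner_scale_right)
  also have "\<dots> = (\<Sum>t\<in>T. if s = t then cinner t v else 0)"
    using assms by (intro sum.cong) (auto simp: orthonormal_def)
  also have "\<dots> = cinner s v"
    using assms by (simp add: orthonormal_def)
  finally show ?thesis .
qed

lemma orth_proj_span:
  assumes "orthonormal T" "x \<in> vec.span T"
  shows "orth_proj T x = x"
  using assms(2)
proof (induction rule: vec.span_induct)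
  case base
  show ?case
    by (simp add: vec.subspace_def orth_proj_zero orth_proj_add orth_proj_scale)
next
  case (step t)
  have "orth_proj T t = (\<Sum>s\<in>T. if s = t then t else 0)"
    using assms(1) step unfolding orth_proj_def orthonormal_def by (intro sum.cong) auto
  then show ?case
    using step assms(1) by (simp add: orthonormal_def)
qed

lemma orthonormal_insert_exists:
  assumes T: "orthonormal T" and v: "v \<notin> vec.span T"
  obtains u where "u \<notin> T" "orthonormal (insert u T)" "v \<in> vec.span (insert u T)"
proof -
  define w where "w = v - orth_proj T v"
  have "w \<noteq> 0"
    using v orth_proj_in_span[of T v] by (auto simp: w_def)
  then have n: "norm w > 0"
    by simp
  define u where "u = complex_of_real (1 / norm w) *s w"
  have uu: "cinner u u = 1"
    by (simp only: u_def cinner_scale_left cinner_scale_right)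
      (use n in \<open>simp add: cinner_self power2_eq_square\<close>)
  have tu: "cinner t u = 0" if "t \<in> T" for t
    using cinner_orth_proj[OF T that]
    by (simp add: u_def w_def cinner_scale_right cinner_diff_right)
  have ut: "cinner u t = 0" if "t \<in> T" for t
    using tu[OF that] cinner_commute[of t u] by simp
  have "u \<notin> T"
    using tu uu by fastforce
  moreover have "orthonormal (insert u T)"
    using T uu tu ut unfolding orthonormal_def by auto
  moreover have "v \<in> vec.span (insert u T)"
  proof -
    have "v = complex_of_real (norm w) *s u + orth_proj T v"
      using n by (simp add: u_def w_def vector_smult_assoc)
    moreover have "complex_of_real (norm w) *s u \<in> vec.span (insert u T)"
      by (simp add: vec.span_base vec.span_scale)
    moreover have "orth_proj T v \<in> vec.span (insert u T)"
      using orth_proj_in_span vec.span_mono[of T "insert u T"] by blast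
    ultimately show ?thesis
      by (metis vec.span_add)
  qed
  ultimately show ?thesis
    using that by blast
qed

lemma orthonormal_spanning_exists:
  assumes "finite V"
  obtains T :: "(complex^'n) set"
  where "orthonormal T" "card T \<le> card V" "V \<subseteq> vec.span T"
  using assms
proof (induction arbitrary: thesis rule: finite_induct)
  case empty
  show ?case
    by (rule empty.prems[of "{}"]) (auto simp: orthonormal_def)
next
  case (insert v V)
  obtain T where T: "orthonormal T" "card T \<le> card V" "V \<subseteq> vec.span T"
    using insert.IH by blast
  show ?case
  proof (cases "v \<in> vec.span T")
    case True
    then show ?thesis
      using T insert by (intro insert.prems[of T]) auto
  next
    case False
    then obtain u where u: "u \<notin> T" "orthonormal (insert u T)" "v \<in> vec.span (insert u T)"
      using orthonormal_insert_exists[OF T(1)] by blast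
    show ?thesis
    proof (rule insert.prems[of "insert u T"])
      show "card (insert u T) \<le> card (insert v V)"
        using u T insert unfolding orthonormal_def by simp
      show "insert v V \<subseteq> vec.span (insert u T)"
        using u T vec.span_mono[of T "insert u T"] by auto
    qed (use u in simp)
  qed
qed

lemma orthonormal_extend:
  assumes "orthonormal (T :: (complex^'n) set)" "card T \<le> k" "k \<le> CARD('n)"
  obtains T' where "T \<subseteq> T'" "orthonormal T'" "card T' = k"
  using assms
proof (induction "k - card T" arbitrary: T thesis)
  case 0
  then show ?case
    by fastforce
next
  case (Suc m)
  have "finite T"
    using Suc.prems(2) by (simp add: orthonormal_def)
  have "vec.span T \<noteq> UNIV"
  proof
    assume "vec.span T = UNIV"
    then have "CARD('n) \<le> card T"
      using vec.dim_le_card'[OF \<open>finite T\<close>] vec.dim_span[of T]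
        vec_dim_card[where 'a=complex and 'n='n] by simp
    then show False
      using Suc.hyps(2) Suc.prems(4) by simp
  qed
  then obtain v where "v \<notin> vec.span T"
    by blast
  then obtain u where u: "u \<notin> T" "orthonormal (insert u T)"
    using orthonormal_insert_exists[OF Suc.prems(2)] by blast
  moreover have "m = k - card (insert u T)" "card (insert u T) \<le> k"
    using Suc.hyps(2) u(1) \<open>finite T\<close> by simp_all
  ultimately obtain T' where "insert u T \<subseteq> T'" "orthonormal T'" "card T' = k"
    using Suc.hyps(1) Suc.prems(4) by blast
  then show ?case
    using Suc.prems(1) by blast
qed

lemma isometry_with_range_exists:
  fixes J :: "complex^'i::finite^'b::finite"
  assumes "CARD('i) \<le> CARD('b)"
  obtains Q :: "complex^'i^'b" where "ctrans Q ** Q = mat 1" "Q ** (ctrans Q ** J) = J"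
proof -
  define V where "V = range (\<lambda>c. column c J)"
  obtain T0 where T0: "orthonormal T0" "card T0 \<le> card V" "V \<subseteq> vec.span T0"
    using orthonormal_spanning_exists[of V] by (auto simp: V_def)
  have "card V \<le> CARD('i)"
    unfolding V_def by (rule card_image_le) simp
  then obtain T where T: "T0 \<subseteq> T" "orthonormal T" "card T = CARD('i)"
    using orthonormal_extend[OF T0(1), of "CARD('i)"] T0(2) assms by auto
  then have "finite T"
    by (simp add: orthonormal_def)
  then obtain f where f: "bij_betw f (UNIV :: 'i set) T"
    using finite_same_card_bij[of "UNIV :: 'i set" T] T(3) by auto
  define Q where "Q = (\<chi> r i. f i $ r :: complex^'i^'b)"
  have "(ctrans Q ** Q) $ i $ j = cinner (f i) (f j)" for i j
    by (simp add: Q_def ctrans_def matrix_matrix_mult_def cinner_def)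
  moreover have "cinner (f i) (f j) = (if i = j then 1 else 0)" for i j
    using T(2) f bij_betw_apply[OF f] unfolding orthonormal_def bij_betw_def inj_on_def
    by (metis UNIV_I)
  ultimately have "ctrans Q ** Q = mat 1"
    by (simp add: vec_eq_iff mat_def)
  moreover have "(Q ** (ctrans Q ** J)) $ r $ c = J $ r $ c" for r c
  proof -
    have "column c J \<in> vec.span T"
      using T0(3) T(1) vec.span_mono unfolding V_def by blast
    then have "J $ r $ c = orth_proj T (column c J) $ r"
      using orth_proj_span[OF T(2)] by (simp add: column_def)
    also have "\<dots> = (\<Sum>i\<in>UNIV. cinner (f i) (column c J) * f i $ r)"
      by (simp add: orth_proj_def sum_component sum.reindex_bij_betw[OF f, symmetric])
    also have "\<dots> = (Q ** (ctrans Q ** J)) $ r $ c"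
      by (simp add: Q_def ctrans_def matrix_matrix_mult_def cinner_def column_def
          sum_distrib_left sum_distrib_right mult.commute mult.left_commute)
    finally show ?thesis
      by simp
  qed
  then have "Q ** (ctrans Q ** J) = J"
    by (simp add: vec_eq_iff)
  ultimately show ?thesis
    using that by blast
qed

section \<open>Orthogonal projection onto a column space and the pseudoinverse\<close>

lemma range_mult_left_inverse:
  fixes Q J :: "'a::field^'i::finite^'b::finite"
  assumes "Q ** (C ** J) = J" "K ** J = mat 1"
  shows "J ** (K ** Q) = Q"
proof -
  have "(K ** Q) ** (C ** J) = mat 1"
    using assms by (metis matrix_mul_assoc)
  then have CK: "(C ** J) ** (K ** Q) = mat 1"
    using matrix_left_right_inverse by blast
  have "J ** (K ** Q) = Q ** ((C ** J) ** (K ** Q))"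
    using assms(1) by (metis matrix_mul_assoc)
  then show ?thesis
    using CK by simp
qed

lemma range_projection_unique:
  fixes Q Q' J :: "complex^'i::finite^'b::finite"
  assumes "Q ** (ctrans Q ** J) = J" "Q' ** (ctrans Q' ** J) = J" "K ** J = mat 1"
  shows "Q ** ctrans Q = Q' ** ctrans Q'"
proof -
  have absorb: "(A ** ctrans A) ** (B ** ctrans B) = B ** ctrans B"
    if "A ** (ctrans A ** J) = J" "B ** (ctrans B ** J) = J" for A B :: "complex^'i^'b"
  proof -
    have "(A ** ctrans A) ** B = (A ** (ctrans A ** J)) ** (K ** B)"
      using range_mult_left_inverse[OF that(2) assms(3)] by (metis matrix_mul_assoc)
    also have "\<dots> = B"
      using range_mult_left_inverse[OF that(2) assms(3)] that(1) by simp
    finally show ?thesis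
      by (metis matrix_mul_assoc)
  qed
  have "Q ** ctrans Q = ctrans ((Q' ** ctrans Q') ** (Q ** ctrans Q))"
    using absorb[OF assms(2,1)] by (simp add: ctrans_matrix_mult matrix_mul_assoc)
  also have "\<dots> = (Q ** ctrans Q) ** (Q' ** ctrans Q')"
    by (simp add: ctrans_matrix_mult matrix_mul_assoc)
  also have "\<dots> = Q' ** ctrans Q'"
    using absorb[OF assms(1,2)] .
  finally show ?thesis .
qed

definition penrose :: "complex^'n^'m \<Rightarrow> complex^'m^'n \<Rightarrow> bool" where
  "penrose A X \<longleftrightarrow> A ** X ** A = A \<and> X ** A ** X = X \<and>
     ctrans (A ** X) = A ** X \<and> ctrans (X ** A) = X ** A"

lemma penrose_unique:
  assumes "penrose A X" "penrose A Y"
  shows "X = Y"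
proof -
  note X = assms(1)[unfolded penrose_def] and Y = assms(2)[unfolded penrose_def]
  have "X = X ** ctrans (A ** X)"
    using X by (simp add: matrix_mul_assoc)
  also have "\<dots> = X ** ctrans X ** ctrans (A ** Y ** A)"
    using Y by (simp add: ctrans_matrix_mult matrix_mul_assoc)
  also have "\<dots> = X ** ctrans (A ** X) ** ctrans (A ** Y)"
    by (simp add: ctrans_matrix_mult matrix_mul_assoc)
  also have "\<dots> = X ** A ** Y"
    using X Y by (metis matrix_mul_assoc)
  finally have XAY: "X = X ** A ** Y" .
  have "Y = ctrans (Y ** A) ** Y"
    using Y by simp
  also have "\<dots> = ctrans (A ** X ** A) ** ctrans Y ** Y"
    using X by (simp add: ctrans_matrix_mult)
  also have "\<dots> = ctrans (X ** A) ** ctrans (Y ** A) ** Y"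
    by (simp add: ctrans_matrix_mult matrix_mul_assoc)
  also have "\<dots> = X ** A ** Y"
    using X Y by (metis matrix_mul_assoc)
  finally show ?thesis
    using XAY by simp
qed

lemma pinv_eqI: "penrose A X \<Longrightarrow> pinv A = X"
  unfolding pinv_def penrose_def[symmetric] using penrose_unique by blast

lemma matrix_mult_pinv_eq_range_projection:
  fixes Q J :: "complex^'i::finite^'b::finite"
  assumes "Q ** (ctrans Q ** J) = J" "K ** J = mat 1"
  shows "J ** pinv J = Q ** ctrans Q"
proof -
  define X where "X = K ** Q ** ctrans Q"
  have JX: "J ** X = Q ** ctrans Q"
    using range_mult_left_inverse[OF assms] by (simp add: X_def matrix_mul_assoc)
  have XJ: "X ** J = mat 1"
    using assms by (simp add: X_def flip: matrix_mul_assoc)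
  have "penrose J X"
    using JX XJ assms(1) by (simp add: penrose_def ctrans_matrix_mult flip: matrix_mul_assoc)
  then show ?thesis
    using JX by (simp add: pinv_eqI)
qed

section \<open>Eclipsing\<close>

lemma qpsk_uminus: "x \<in> qpsk \<Longrightarrow> - x \<in> qpsk"
  unfolding qpsk_def
proof clarify
  fix a b :: real
  assume "a \<in> {-1, 1}" "b \<in> {-1, 1}"
  then show "\<exists>a' b'. a' \<in> {-1, 1} \<and> b' \<in> {-1, 1} \<and>
      - ((complex_of_real a + \<i> * complex_of_real b) / complex_of_real (sqrt 2)) =
        (complex_of_real a' + \<i> * complex_of_real b') / complex_of_real (sqrt 2)"
    by (intro exI[of _ "-a"] exI[of _ "-b"]) (auto simp: field_simps)
qed

lemma zero_notin_qpsk: "0 \<notin> qpsk"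
proof
  assume "0 \<in> qpsk"
  then obtain a b :: real where "a \<in> {-1, 1}" "complex_of_real a + \<i> * complex_of_real b = 0"
    by (auto simp: qpsk_def)
  moreover have "Re (complex_of_real a + \<i> * complex_of_real b) = a"
    by simp
  ultimately show False
    by auto
qed

lemma mat_over_qpsk_change_row:
  fixes S :: "complex^'d^'u"
  assumes "S \<in> mat_over qpsk"
  obtains S' where "S' \<in> mat_over qpsk" "S' \<noteq> S" "\<And>u. u \<noteq> u0 \<Longrightarrow> row u S' = row u S"
proof
  fix d0 :: 'd
  define S' where "S' = (\<chi> u d. if u = u0 \<and> d = d0 then - S $ u $ d else S $ u $ d)"
  have "S $ u0 $ d0 \<in> qpsk"
    using assms by (simp add: mat_over_def)
  then have "S' $ u0 $ d0 \<noteq> S $ u0 $ d0"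
    using zero_notin_qpsk by (auto simp: S'_def)
  then show "S' \<noteq> S"
    by auto
  show "S' \<in> mat_over qpsk"
    using assms by (simp add: mat_over_def S'_def qpsk_uminus)
  show "row u S' = row u S" if "u \<noteq> u0" for u
    using that by (simp add: row_def S'_def)
qed

lemma row_in_span_other_rows:
  fixes W :: "'a::field^'d::finite^'i::finite"
  assumes "z $ i0 \<noteq> 0" "z v* W = 0"
  shows "row i0 W \<in> vec.span ((\<lambda>i. row i W) ` (- {i0}))"
proof -
  have "W $ i0 $ d = (\<Sum>i\<in>- {i0}. (- z $ i / z $ i0) * W $ i $ d)" for d
  proof -
    have "(\<Sum>i\<in>UNIV. z $ i * W $ i $ d) = 0"
      using assms(2) by (simp add: vector_matrix_mult_def vec_eq_iff)
    then have "z $ i0 * W $ i0 $ d + (\<Sum>i\<in>- {i0}. z $ i * W $ i $ d) = 0"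
      by (simp add: sum.remove[of UNIV i0] Compl_eq_Diff_UNIV)
    then show ?thesis
      using assms(1)
      by (simp add: sum_divide_distrib[symmetric] sum_negf field_simps eq_neg_iff_add_eq_0)
  qed
  then have row_eq: "row i0 W = (\<Sum>i\<in>- {i0}. (- z $ i / z $ i0) *s row i W)"
    by (simp add: row_def vec_eq_iff sum_component)
  show ?thesis
    unfolding row_eq by (intro vec.span_sum vec.span_scale vec.span_base imageI)
qed

lemma eclipsed_if_left_kernel_nonzero:
  fixes S :: "complex^'d::finite^'u::finite" and W :: "complex^'d^'i::finite"
  assumes S: "S \<in> mat_over qpsk" and "z \<noteq> 0" "z v* W = 0"
  shows "eclipsed S W"
proof -
  obtain i0 where i0: "z $ i0 \<noteq> 0"
    using assms(2) by (metis vec_eq_iff zero_index)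
  fix u0 :: 'u
  obtain S' where S': "S' \<in> mat_over qpsk" "S' \<noteq> S" "\<And>u. u \<noteq> u0 \<Longrightarrow> row u S' = row u S"
    using mat_over_qpsk_change_row[OF S] by blast
  define B where "B = insert (row u0 (S - S')) ((\<lambda>i. row i W) ` (- {i0}))"
  have "rows (vcat (S - S') W) \<subseteq> vec.span B"
  proof
    fix x assume "x \<in> rows (vcat (S - S') W)"
    then obtain r where x: "x = row r (vcat (S - S') W)"
      by (auto simp: rows_def)
    show "x \<in> vec.span B"
    proof (cases r)
      case (Inl u)
      then have "x = row u (S - S')"
        by (simp add: x row_def vcat_def)
      moreover have "row u (S - S') = 0" if "u \<noteq> u0"
        using S'(3)[OF that] by (simp add: row_def vec_eq_iff)
      ultimately show ?thesis
        by (cases "u = u0") (auto simp: B_def vec.span_base vec.span_zero)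
    next
      case (Inr i)
      then have "x = row i W"
        by (simp add: x row_def vcat_def)
      moreover have "row i0 W \<in> vec.span B"
        using row_in_span_other_rows[OF i0 assms(3)] vec.span_mono[of _ B] by (auto simp: B_def)
      ultimately show ?thesis
        by (cases "i = i0") (auto simp: B_def vec.span_base)
    qed
  qed
  moreover have "card B \<le> CARD('i)"
  proof -
    have "card B \<le> Suc (card ((\<lambda>i. row i W) ` (- {i0})))"
      by (simp add: B_def card_insert_if)
    also have "\<dots> \<le> Suc (card (- {i0}))"
      by (simp add: card_image_le)
    also have "\<dots> = CARD('i)"
      by (simp add: Compl_eq_Diff_UNIV card_Diff_singleton)
    finally show ?thesis .
  qed
  ultimately have "rank (vcat (S - S') W) \<le> CARD('i)"
    using rank_le_card_if_rows_in_span[of _ B] by (fastforce simp: B_def)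
  then show ?thesis
    using S' by (auto simp: eclipsed_def)
qed

lemma not_eclipsed_mult_right_eq_0:
  fixes A :: "complex^'i::finite^'m::finite"
  assumes "S \<in> mat_over qpsk" "\<not> eclipsed S W" "A ** W = 0"
  shows "A = 0"
proof (rule ccontr)
  assume "A \<noteq> 0"
  then obtain r where "row r A \<noteq> 0"
    by (metis row_def vec_eq_iff vec_lambda_eta zero_index)
  moreover have "row r A v* W = 0"
    using assms(3) by (metis row_matrix_mult row_def vec_lambda_eta zero_index vec_eq_iff)
  ultimately show False
    using eclipsed_if_left_kernel_nonzero assms(1,2) by blast
qed

lemma eclipsed_if_residual_in_low_rank_range:
  fixes H :: "complex^'u::finite^'b::finite" and J :: "complex^'i::finite^'b"
    and Q :: "complex^'i^'b" and X :: "complex^'d::finite^'i"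
  assumes "L ** hcat H J = mat 1" "S' \<in> mat_over qpsk" "S' \<noteq> S"
    and "H ** S + J ** W - H ** S' = Q ** X"
  shows "eclipsed S W"
proof -
  have "hcat H J ** vcat (S - S') W = Q ** X"
    using assms(4) by (simp add: hcat_matrix_mult_vcat matrix_diff_ldistrib algebra_simps)
  then have "vcat (S - S') W = (L ** Q) ** X"
    using assms(1) by (metis matrix_mul_assoc matrix_mul_lid)
  then show ?thesis
    using rank_matrix_mult_le[of "L ** Q" X] assms(2,3) by (auto simp: eclipsed_def)
qed

lemma projected_residual_eq_0_imp:
  fixes H :: "complex^'u::finite^'b::finite" and J :: "complex^'i::finite^'b"
    and Q :: "complex^'i^'b" and S S' :: "complex^'d::finite^'u"
  assumes "L ** hcat H J = mat 1" "S \<in> mat_over qpsk" "S' \<in> mat_over qpsk" "\<not> eclipsed S W"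
    and "(mat 1 - Q ** ctrans Q) ** (H ** S + J ** W - H ** S') = 0"
  shows "S' = S" "Q ** (ctrans Q ** J) = J"
proof -
  define N where "N = H ** S + J ** W - H ** S'"
  have "N = Q ** (ctrans Q ** N)"
    using assms(5) by (simp add: N_def[symmetric] matrix_diff_rdistrib matrix_mul_assoc)
  then show "S' = S"
    using eclipsed_if_residual_in_low_rank_range[OF assms(1,3)] assms(4) N_def by metis
  then have "((mat 1 - Q ** ctrans Q) ** J) ** W = 0"
    using assms(5) by (simp add: matrix_mul_assoc)
  then have "(mat 1 - Q ** ctrans Q) ** J = 0"
    using not_eclipsed_mult_right_eq_0 assms(2,4) by blast
  then show "Q ** (ctrans Q ** J) = J"
    by (simp add: matrix_diff_rdistrib matrix_mul_assoc)
qed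

theorem theorem1:
  fixes H :: "complex^'u::finite^'b::finite"
    and J :: "complex^'i::finite^'b"
    and S :: "complex^'d::finite^'u"
    and W :: "complex^'d^'i"
    and Y :: "complex^'d^'b"
  assumes "CARD('b) \<ge> CARD('u) + CARD('i)"
    and "rank (hcat H J) = CARD('u) + CARD('i)"
    and "S \<in> mat_over qpsk"
    and "Y = H ** S + J ** W"
    and "\<not> eclipsed S W"
  shows "(mat 1 - J ** pinv J) \<in> grass_proj TYPE('i) \<and>
         (\<forall>S' \<in> mat_over qpsk. \<forall>P \<in> grass_proj TYPE('i).
            (P, S') \<noteq> (mat 1 - J ** pinv J, S) \<longrightarrow>
            frob_sq ((mat 1 - J ** pinv J) ** (Y - H ** S)) < frob_sq (P ** (Y - H ** S')))"
proof -
  have "rank (hcat H J) = CARD('u + 'i)"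
    using assms(2) by simp
  then obtain L where L: "L ** hcat H J = mat 1"
    by (rule full_column_rank_left_invertible)
  define K where "K = (\<chi> i c. L $ Inr i $ c)"
  have K: "K ** J = mat 1"
    unfolding K_def using L by (rule left_inverse_hcat_right)
  have "CARD('i) \<le> CARD('b)"
    using assms(1) by simp
  then obtain Q :: "complex^'i^'b" where Q: "ctrans Q ** Q = mat 1" "Q ** (ctrans Q ** J) = J"
    by (rule isometry_with_range_exists)
  have P_hat: "mat 1 - J ** pinv J = mat 1 - Q ** ctrans Q"
    using matrix_mult_pinv_eq_range_projection[OF Q(2) K] by simp
  have "(mat 1 - Q ** ctrans Q) ** (J ** W) = 0"
    using Q(2) by (simp add: matrix_diff_rdistrib matrix_mul_assoc)
  then have residual_hat: "(mat 1 - J ** pinv J) ** (Y - H ** S) = 0"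
    using assms(4) P_hat by simp
  have residual: "P ** (Y - H ** S') \<noteq> 0"
    if S': "S' \<in> mat_over qpsk" and P: "P \<in> grass_proj TYPE('i)"
      and ne: "(P, S') \<noteq> (mat 1 - J ** pinv J, S)" for P S'
  proof
    assume "P ** (Y - H ** S') = 0"
    moreover obtain Q' :: "complex^'i^'b" where Q': "P = mat 1 - Q' ** ctrans Q'"
      using P by (auto simp: grass_proj_def)
    ultimately have "(mat 1 - Q' ** ctrans Q') ** (H ** S + J ** W - H ** S') = 0"
      using assms(4) by simp
    note eq = projected_residual_eq_0_imp[OF L assms(3) S' assms(5) this]
    have "P = mat 1 - J ** pinv J"
      using range_projection_unique[OF Q(2) eq(2) K] Q' P_hat by simp
    with ne eq(1) show False
      by simp
  qed
  show ?thesis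
  proof (intro conjI ballI impI)
    show "mat 1 - J ** pinv J \<in> grass_proj TYPE('i)"
      unfolding P_hat grass_proj_def using Q(1) by blast
  next
    fix S' P
    assume "S' \<in> mat_over qpsk" "P \<in> grass_proj TYPE('i)" "(P, S') \<noteq> (mat 1 - J ** pinv J, S)"
    then show "frob_sq ((mat 1 - J ** pinv J) ** (Y - H ** S)) < frob_sq (P ** (Y - H ** S'))"
      using residual residual_hat by (simp add: frob_sq_pos_iff)
  qed
qed

end
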